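(* Let $n\in\mathbb{N}$ and $1\le K\le 2^n$. Let $\varphi$ be a uniformly random permutation of $\{0,1\}^{2n}$ among those having exactly $K$ zero pairs. Any quantum algorithm that makes $T$ queries to $\varphi$ and $\varphi^{-1}$ and outputs a zero pair of $\varphi$ with probability $\epsilon>0$ satisfies $$\epsilon\le\frac{8(T+1)^2K}{2^n}.$$
   Context: A zero pair of a permutation $\varphi$ of $\{0,1\}^{2n}$ is a pair $(x,y)\in\{0,1\}^n\times\{0,1\}^n$ with $\varphi(x\|0^n)=y\|0^n$. Queries are to the unitaries $O_\varphi:|a\rangle|b\rangle\mapsto|a\rangle|b\oplus\varphi(a)\rangle$ and $O_{\varphi^{-1}}:|a\rangle|b\rangle\mapsto|a\rangle|b\oplus\varphi^{-1}(a)\rangle$; the success probability is over $\varphi$ and the algorithm's internal randomness and measurements. *)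

theory Defs
  imports Complex_Main "HOL-Combinatorics.Permutations"
begin

text \<open>Bit strings of length m are encoded (big-endian) as naturals below 2^m,
so the concatenation x || y of x in {0,1}^n and y in {0,1}^n is x * 2^n + y,
and x || 0^n is x * 2^n.  Bitwise XOR of strings is xor on naturals.\<close>

definition is_perm :: "nat \<Rightarrow> (nat \<Rightarrow> nat) \<Rightarrow> bool" where
  "is_perm n \<phi> \<longleftrightarrow> \<phi> permutes {..<2^(2*n)}"

definition zero_pairs :: "nat \<Rightarrow> (nat \<Rightarrow> nat) \<Rightarrow> (nat \<times> nat) set" where
  "zero_pairs n \<phi> = {(x, y). x < 2^n \<and> y < 2^n \<and> \<phi> (x * 2^n) = y * 2^n}"

definition perms_K :: "nat \<Rightarrow> nat \<Rightarrow> (nat \<Rightarrow> nat) set" where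
  "perms_K n K = {\<phi>. is_perm n \<phi> \<and> card (zero_pairs n \<phi>) = K}"

text \<open>Quantum state space: registers |a>|b>|w> with a, b in {0,1}^(2n) and a
workspace register w < W.
Vectors are functions nat => complex on {..<dim}; matrices are nat => nat => complex.\<close>

definition qdim :: "nat \<Rightarrow> nat \<Rightarrow> nat" where
  "qdim n W = 2^(2*n) * 2^(2*n) * W"

definition enc :: "nat \<Rightarrow> nat \<Rightarrow> nat \<Rightarrow> nat \<Rightarrow> nat \<Rightarrow> nat" where
  "enc n W a b w = (a * 2^(2*n) + b) * W + w"

definition mat_vec :: "nat \<Rightarrow> (nat \<Rightarrow> nat \<Rightarrow> complex) \<Rightarrow> (nat \<Rightarrow> complex) \<Rightarrow> (nat \<Rightarrow> complex)" where
  "mat_vec D U v = (\<lambda>i. if i < D then (\<Sum>k<D. U i k * v k) else 0)"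

definition unitary_mat :: "nat \<Rightarrow> (nat \<Rightarrow> nat \<Rightarrow> complex) \<Rightarrow> bool" where
  "unitary_mat D U \<longleftrightarrow>
     (\<forall>i<D. \<forall>j<D. (\<Sum>k<D. U i k * cnj (U j k)) = (if i = j then 1 else 0))"

text \<open>Standard oracle |a>|b>|w> |-> |a>|b xor f(a)>|w> (acting on all of the space).\<close>
definition oracle_apply :: "nat \<Rightarrow> nat \<Rightarrow> (nat \<Rightarrow> nat) \<Rightarrow> (nat \<Rightarrow> complex) \<Rightarrow> (nat \<Rightarrow> complex)" where
  "oracle_apply n W f v =
     (\<lambda>i. if i < qdim n W then
            (let a = i div W div 2^(2*n); b = i div W mod 2^(2*n); w = i mod W
             in v (enc n W a (Bit_Operations.xor b (f a)) w))
          else 0)"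

definition query :: "nat \<Rightarrow> nat \<Rightarrow> (nat \<Rightarrow> nat) \<Rightarrow> bool \<Rightarrow> (nat \<Rightarrow> complex) \<Rightarrow> (nat \<Rightarrow> complex)" where
  "query n W \<phi> s = oracle_apply n W (if s then \<phi> else inv_into {..<2^(2*n)} \<phi>)"

text \<open>Final state after U_0, query_1, U_1, ..., query_T, U_T applied to |0>.
(Internal randomness and intermediate measurements are purified into the workspace.)\<close>
fun run :: "nat \<Rightarrow> nat \<Rightarrow> (nat \<Rightarrow> nat \<Rightarrow> nat \<Rightarrow> complex) \<Rightarrow> (nat \<Rightarrow> bool)
            \<Rightarrow> (nat \<Rightarrow> nat) \<Rightarrow> nat \<Rightarrow> (nat \<Rightarrow> complex)" where
  "run n W U sel \<phi> 0 = mat_vec (qdim n W) (U 0) (\<lambda>i. if i = 0 then 1 else 0)"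
| "run n W U sel \<phi> (Suc t) =
     mat_vec (qdim n W) (U (Suc t)) (query n W \<phi> (sel (Suc t)) (run n W U sel \<phi> t))"

definition success_fixed :: "nat \<Rightarrow> nat \<Rightarrow> (nat \<Rightarrow> nat \<Rightarrow> nat \<Rightarrow> complex) \<Rightarrow> (nat \<Rightarrow> bool)
     \<Rightarrow> (nat \<Rightarrow> nat \<times> nat) \<Rightarrow> nat \<Rightarrow> (nat \<Rightarrow> nat) \<Rightarrow> real" where
  "success_fixed n W U sel out T \<phi> =
     (\<Sum>j\<in>{j. j < qdim n W \<and> out j \<in> zero_pairs n \<phi>}. (cmod (run n W U sel \<phi> T j))\<^sup>2)"

definition success_prob :: "nat \<Rightarrow> nat \<Rightarrow> nat \<Rightarrow> (nat \<Rightarrow> nat \<Rightarrow> nat \<Rightarrow> complex) \<Rightarrow> (nat \<Rightarrow> bool)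
     \<Rightarrow> (nat \<Rightarrow> nat \<times> nat) \<Rightarrow> nat \<Rightarrow> real" where
  "success_prob n K W U sel out T =
     (\<Sum>\<phi>\<in>perms_K n K. success_fixed n W U sel out T \<phi>) / real (card (perms_K n K))"

end

theory Submission
  imports Defs "Jordan_Normal_Form.Determinant" "HOL-Analysis.L2_Norm"
begin

text \<open>The pairs (\<alpha>, \<beta>) of permutations of {0,1}^(2n) that map the strings x || 0^n onto
  themselves act on permutations by \<phi> \<mapsto> \<beta> \<circ> \<phi> \<circ> \<alpha> and preserve the number of zero pairs,
  so it suffices to bound the average success over the orbit of a single \<phi> with K zero pairs.
  Moving the K zero-pair inputs of \<phi> elsewhere gives a permutation \<phi>' without zero pairs
  that differs from \<phi> on 2K inputs. Rotating the strings x || 0^n and, independently, their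
  \<phi>'-preimages by k = 0, ..., 2^n - 1 gives 2^n symmetries fixing \<phi>'; they move the 2K
  inputs around so that every input is changed by at most K of the 2^n rotated copies of \<phi>,
  and every candidate output is a zero pair of at most K of them. By the hybrid argument the
  success probability of each copy is at most 8T times the weight of its queries on changed
  inputs plus twice the probability that the run with oracle \<phi>' outputs one of its zero
  pairs; summed over the copies this is at most (8T^2 + 2) K, i.e. (8T^2 + 2) K / 2^n on
  average.\<close>

definition sq_norm :: "nat \<Rightarrow> (nat \<Rightarrow> complex) \<Rightarrow> real" where
  "sq_norm D v = (\<Sum>i<D. (cmod (v i))\<^sup>2)"

lemma sq_norm_nonneg: "0 \<le> sq_norm D v"
  by (simp add: sq_norm_def sum_nonneg)

lemma of_real_sq_norm: "complex_of_real (sq_norm D v) = (\<Sum>i<D. v i * cnj (v i))"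
  unfolding sq_norm_def of_real_sum by (intro sum.cong refl) (simp only: complex_norm_square)

lemma sqrt_sq_norm_eq_L2_set: "sqrt (sq_norm D v) = L2_set (\<lambda>i. cmod (v i)) {..<D}"
  by (simp add: L2_set_def sq_norm_def)

lemma sqrt_sq_norm_add_le: "sqrt (sq_norm D (\<lambda>i. v i + w i)) \<le> sqrt (sq_norm D v) + sqrt (sq_norm D w)"
proof -
  have "L2_set (\<lambda>i. cmod (v i + w i)) {..<D} \<le> L2_set (\<lambda>i. cmod (v i) + cmod (w i)) {..<D}"
    by (rule L2_set_mono) (auto simp: norm_triangle_ineq)
  also have "\<dots> \<le> L2_set (\<lambda>i. cmod (v i)) {..<D} + L2_set (\<lambda>i. cmod (w i)) {..<D}"
    by (rule L2_set_triangle_ineq)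
  finally show ?thesis by (simp add: sqrt_sq_norm_eq_L2_set)
qed

text \<open>A one-sided inverse of a square matrix is two-sided, so the columns of a unitary
  matrix are orthonormal as well as its rows.\<close>
lemma unitary_mat_cols_orthonormal:
  assumes "unitary_mat D U" "k < D" "l < D"
  shows "(\<Sum>i<D. cnj (U i k) * U i l) = (if k = l then 1 else 0)"
proof -
  define A where "A = mat D D (\<lambda>(i,j). U i j)"
  define B where "B = mat D D (\<lambda>(i,j). cnj (U j i))"
  have A: "A \<in> carrier_mat D D" and B: "B \<in> carrier_mat D D" by (auto simp: A_def B_def)
  have "A * B = 1\<^sub>m D"
  proof (rule eq_matI)
    fix i j assume ij: "i < dim_row (1\<^sub>m D)" "j < dim_col (1\<^sub>m D)"
    then have "(A * B) $$ (i,j) = (\<Sum>k<D. U i k * cnj (U j k))"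
      by (auto simp: A_def B_def scalar_prod_def lessThan_atLeast0 intro!: sum.cong)
    also have "\<dots> = 1\<^sub>m D $$ (i,j)" using assms(1) ij by (auto simp: unitary_mat_def)
    finally show "(A * B) $$ (i,j) = 1\<^sub>m D $$ (i,j)" .
  qed (auto simp: A_def B_def)
  then have BA: "B * A = 1\<^sub>m D" using mat_mult_left_right_inverse[OF A B] by blast
  have "(\<Sum>i<D. cnj (U i k) * U i l) = (B * A) $$ (k,l)"
    using assms by (auto simp: A_def B_def scalar_prod_def lessThan_atLeast0 intro!: sum.cong)
  also have "\<dots> = (if k = l then 1 else 0)" using BA assms by simp
  finally show ?thesis .
qed

lemma sq_norm_mat_vec:
  assumes U: "unitary_mat D U"
  shows "sq_norm D (mat_vec D U v) = sq_norm D v"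
proof -
  have "complex_of_real (sq_norm D (mat_vec D U v)) =
     (\<Sum>i<D. (\<Sum>k<D. U i k * v k) * (\<Sum>l<D. cnj (U i l) * cnj (v l)))"
    by (simp add: of_real_sq_norm mat_vec_def cnj_sum)
  also have "\<dots> = (\<Sum>i<D. \<Sum>k<D. \<Sum>l<D. v k * cnj (v l) * (cnj (U i l) * U i k))"
    by (simp add: sum_product mult_ac)
  also have "\<dots> = (\<Sum>k<D. \<Sum>l<D. \<Sum>i<D. v k * cnj (v l) * (cnj (U i l) * U i k))"
    by (subst sum.swap) (intro sum.cong refl sum.swap)
  also have "\<dots> = (\<Sum>k<D. \<Sum>l<D. v k * cnj (v l) * (if l = k then 1 else 0))"
    by (intro sum.cong refl) (simp add: sum_distrib_left[symmetric] unitary_mat_cols_orthonormal[OF U])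
  also have "\<dots> = complex_of_real (sq_norm D v)"
    by (simp add: of_real_sq_norm if_distrib cong: if_cong)
  finally show ?thesis by (simp only: of_real_eq_iff)
qed

lemma mat_vec_diff: "mat_vec D U v i - mat_vec D U w i = mat_vec D U (\<lambda>k. v k - w k) i"
  by (simp add: mat_vec_def sum_subtractf right_diff_distrib)

section \<open>Oracles as permutations of the computational basis\<close>

lemma enc_decode:
  assumes "w < W" "b < 2^(2*n)"
  shows "enc n W a b w div W div 2^(2*n) = a" "enc n W a b w div W mod 2^(2*n) = b"
    "enc n W a b w mod W = w"
  using assms by (auto simp: enc_def)

lemma enc_less_qdim:
  assumes "a < 2^(2*n)" "b < 2^(2*n)" "w < W"
  shows "enc n W a b w < qdim n W"
proof -
  have "a * 2^(2*n) + b < (a + 1) * 2^(2*n)" using assms(2) by simp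
  also have "\<dots> \<le> 2^(2*n) * 2^(2*n)" using assms(1) by (intro mult_right_mono) auto
  finally have "(a * 2^(2*n) + b + 1) * W \<le> 2^(2*n) * 2^(2*n) * W" by (intro mult_right_mono) auto
  then show ?thesis using assms(3) by (simp add: enc_def qdim_def algebra_simps)
qed

lemma decode_less:
  assumes "i < qdim n W"
  shows "i div W div 2^(2*n) < 2^(2*n)" "i mod W < W"
proof -
  have "i div W < 2^(2*n) * 2^(2*n)" using assms by (simp add: qdim_def less_mult_imp_div_less)
  then show "i div W div 2^(2*n) < 2^(2*n)" by (simp add: div_less_iff_less_mult)
  show "i mod W < W" using assms by (cases "W = 0") (auto simp: qdim_def)
qed

lemma enc_decode_eq: "enc n W (i div W div 2^(2*n)) (i div W mod 2^(2*n)) (i mod W) = i"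
  unfolding enc_def by (metis div_mult_mod_eq)

lemma xor_less_power2: "(b::nat) < 2^m \<Longrightarrow> c < 2^m \<Longrightarrow> xor b c < 2^m"
  using XOR_upper[of "int b" m "int c"] of_nat_xor_eq[of b c]
  by (metis of_nat_0_le_iff of_nat_less_iff of_nat_numeral of_nat_power)

definition oracle_index :: "nat \<Rightarrow> nat \<Rightarrow> (nat \<Rightarrow> nat) \<Rightarrow> nat \<Rightarrow> nat" where
  "oracle_index n W f i =
     enc n W (i div W div 2^(2*n)) (xor (i div W mod 2^(2*n)) (f (i div W div 2^(2*n)))) (i mod W)"

definition query_addr :: "nat \<Rightarrow> nat \<Rightarrow> nat \<Rightarrow> nat" where
  "query_addr n W i = i div W div 2^(2*n)"

lemma query_addr_less: "i < qdim n W \<Longrightarrow> query_addr n W i < 2^(2*n)"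
  by (simp add: query_addr_def decode_less)

lemma
  assumes i: "i < qdim n W" and f: "\<And>a. a < 2^(2*n) \<Longrightarrow> f a < 2^(2*n)"
  shows oracle_index_less: "oracle_index n W f i < qdim n W"
    and query_addr_oracle_index: "query_addr n W (oracle_index n W f i) = query_addr n W i"
    and oracle_index_oracle_index: "oracle_index n W f (oracle_index n W f i) = i"
proof -
  note d = decode_less[OF i]
  have x: "xor (i div W mod 2^(2*n)) (f (i div W div 2^(2*n))) < 2^(2*n)"
    using d f by (intro xor_less_power2) auto
  show "oracle_index n W f i < qdim n W" unfolding oracle_index_def using d x by (intro enc_less_qdim) auto
  note e = enc_decode[OF d(2) x]
  show "query_addr n W (oracle_index n W f i) = query_addr n W i"
    using e by (simp add: oracle_index_def query_addr_def)
  show "oracle_index n W f (oracle_index n W f i) = i"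
    using e by (simp add: oracle_index_def xor.assoc enc_decode_eq)
qed

lemma oracle_apply_eq:
  "oracle_apply n W f v = (\<lambda>i. if i < qdim n W then v (oracle_index n W f i) else 0)"
  unfolding oracle_apply_def oracle_index_def Let_def by simp

lemma sum_oracle_index:
  fixes h :: "nat \<Rightarrow> 'a::comm_monoid_add"
  assumes f: "\<And>a. a < 2^(2*n) \<Longrightarrow> f a < 2^(2*n)"
  shows "(\<Sum>i<qdim n W. h (oracle_index n W f i)) = (\<Sum>i<qdim n W. h i)"
  by (rule sum.reindex_bij_witness[where i="oracle_index n W f" and j="oracle_index n W f"])
     (auto simp: oracle_index_less[OF _ f] oracle_index_oracle_index[OF _ f])

lemma sq_norm_oracle_apply:
  assumes "\<And>a. a < 2^(2*n) \<Longrightarrow> f a < 2^(2*n)"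
  shows "sq_norm (qdim n W) (oracle_apply n W f v) = sq_norm (qdim n W) v"
  unfolding sq_norm_def oracle_apply_eq
  using sum_oracle_index[OF assms, where h="\<lambda>i. (cmod (v i))\<^sup>2"] by simp

lemma oracle_apply_diff:
  "oracle_apply n W f (\<lambda>i. v i - w i) = (\<lambda>i. oracle_apply n W f v i - oracle_apply n W f w i)"
  by (simp add: oracle_apply_eq fun_eq_iff)

lemma norm_diff_power2_le: "(norm (a - b))\<^sup>2 \<le> 2 * (norm a)\<^sup>2 + 2 * (norm b)\<^sup>2"
proof -
  have "(norm (a - b))\<^sup>2 \<le> (norm a + norm b)\<^sup>2"
    by (intro power_mono norm_triangle_ineq4) auto
  also have "\<dots> = 2 * (norm a)\<^sup>2 + 2 * (norm b)\<^sup>2 - (norm a - norm b)\<^sup>2"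
    by (simp add: power2_eq_square algebra_simps)
  finally show ?thesis by (smt (verit) zero_le_power2)
qed

text \<open>Two oracles applied to the same state differ only on the basis vectors whose query
  address is one where f and g disagree.\<close>
lemma sq_norm_oracle_apply_diff_le:
  assumes f: "\<And>a. a < 2^(2*n) \<Longrightarrow> f a < 2^(2*n)" and g: "\<And>a. a < 2^(2*n) \<Longrightarrow> g a < 2^(2*n)"
  shows "sq_norm (qdim n W) (\<lambda>i. oracle_apply n W f v i - oracle_apply n W g v i)
     \<le> 4 * (\<Sum>i<qdim n W. if f (query_addr n W i) \<noteq> g (query_addr n W i) then (cmod (v i))\<^sup>2 else 0)"
proof -
  define D where "D = qdim n W"
  define h where "h i = (if f (query_addr n W i) \<noteq> g (query_addr n W i) then (cmod (v i))\<^sup>2 else 0)" for i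
  have "sq_norm D (\<lambda>i. oracle_apply n W f v i - oracle_apply n W g v i)
      = (\<Sum>i<D. (cmod (v (oracle_index n W f i) - v (oracle_index n W g i)))\<^sup>2)"
    by (simp add: sq_norm_def oracle_apply_eq D_def)
  also have "\<dots> \<le> (\<Sum>i<D. 2 * h (oracle_index n W f i) + 2 * h (oracle_index n W g i))"
  proof (rule sum_mono)
    fix i assume "i \<in> {..<D}"
    then have i: "i < qdim n W" by (simp add: D_def)
    show "(cmod (v (oracle_index n W f i) - v (oracle_index n W g i)))\<^sup>2
        \<le> 2 * h (oracle_index n W f i) + 2 * h (oracle_index n W g i)"
    proof (cases "f (query_addr n W i) = g (query_addr n W i)")
      case True
      then have "oracle_index n W f i = oracle_index n W g i" by (simp add: oracle_index_def query_addr_def)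
      then show ?thesis by (simp add: h_def)
    next
      case False
      then show ?thesis using norm_diff_power2_le query_addr_oracle_index[OF i f] query_addr_oracle_index[OF i g]
        by (simp add: h_def)
    qed
  qed
  also have "\<dots> = 4 * (\<Sum>i<D. h i)"
    using sum_oracle_index[OF f, where h=h] sum_oracle_index[OF g, where h=h]
    by (simp add: sum.distrib sum_distrib_left[symmetric] D_def)
  finally show ?thesis by (simp add: D_def h_def)
qed

section \<open>The hybrid argument\<close>

definition query_fun :: "nat \<Rightarrow> (nat \<Rightarrow> nat) \<Rightarrow> bool \<Rightarrow> nat \<Rightarrow> nat" where
  "query_fun n \<psi> s = (if s then \<psi> else inv_into {..<2^(2*n)} \<psi>)"

lemma query_eq_oracle_apply: "query n W \<psi> s = oracle_apply n W (query_fun n \<psi> s)"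
  by (simp add: query_def query_fun_def)

lemma query_fun_less:
  assumes "\<psi> permutes {..<2^(2*n)}" "a < 2^(2*n)"
  shows "query_fun n \<psi> s a < 2^(2*n)"
proof (cases s)
  case False
  have "a \<in> \<psi> ` {..<2^(2*n)}" using assms permutes_image[OF assms(1)] by simp
  then have "inv_into {..<2^(2*n)} \<psi> a \<in> {..<2^(2*n)}" by (rule inv_into_into)
  then show ?thesis using False by (simp add: query_fun_def)
qed (use assms permutes_in_image[OF assms(1)] in \<open>simp add: query_fun_def\<close>)

lemma sq_norm_run:
  assumes W: "0 < W" and \<psi>: "\<psi> permutes {..<2^(2*n)}"
    and U: "\<And>t. t \<le> T \<Longrightarrow> unitary_mat (qdim n W) (U t)"
  shows "t \<le> T \<Longrightarrow> sq_norm (qdim n W) (run n W U sel \<psi> t) = 1"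
proof (induction t)
  case 0
  have "sq_norm (qdim n W) (\<lambda>i. if i = 0 then 1 else 0) = (\<Sum>i<qdim n W. if i = 0 then 1 else 0)"
    unfolding sq_norm_def by (intro sum.cong) auto
  also have "\<dots> = 1" using W by (simp add: qdim_def)
  finally have "sq_norm (qdim n W) (\<lambda>i. if i = 0 then 1 else 0) = 1" .
  then show ?case using U[of 0] by (simp add: sq_norm_mat_vec)
next
  case (Suc t)
  then show ?case using U[of "Suc t"]
    by (simp add: sq_norm_mat_vec query_eq_oracle_apply sq_norm_oracle_apply query_fun_less[OF \<psi>])
qed

lemma success_fixed_le_one:
  assumes "0 < W" "\<psi> permutes {..<2^(2*n)}" "\<And>t. t \<le> T \<Longrightarrow> unitary_mat (qdim n W) (U t)"
  shows "success_fixed n W U sel out T \<psi> \<le> 1"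
proof -
  have "success_fixed n W U sel out T \<psi> \<le> sq_norm (qdim n W) (run n W U sel \<psi> T)"
    unfolding success_fixed_def sq_norm_def by (rule sum_mono2) auto
  then show ?thesis using sq_norm_run[OF assms] by simp
qed

text \<open>The squared amplitude that the state of the run with oracle \<psi>' puts, just before query
  s + 1, on addresses where the queried functions of \<psi> and \<psi>' differ.\<close>
definition query_weight :: "nat \<Rightarrow> nat \<Rightarrow> (nat \<Rightarrow> nat \<Rightarrow> nat \<Rightarrow> complex) \<Rightarrow> (nat \<Rightarrow> bool)
   \<Rightarrow> (nat \<Rightarrow> nat) \<Rightarrow> (nat \<Rightarrow> nat) \<Rightarrow> nat \<Rightarrow> real" where
  "query_weight n W U sel \<psi> \<psi>' s =
     (\<Sum>i<qdim n W. if query_fun n \<psi> (sel (Suc s)) (query_addr n W i) \<noteq> query_fun n \<psi>' (sel (Suc s)) (query_addr n W i)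
       then (cmod (run n W U sel \<psi>' s i))\<^sup>2 else 0)"

text \<open>The hybrid argument: replacing the oracle of one query at a time changes the final
  state by at most twice the square root of that query's weight.\<close>
lemma run_dist_le:
  assumes \<psi>: "\<psi> permutes {..<2^(2*n)}" and \<psi>': "\<psi>' permutes {..<2^(2*n)}"
    and U: "\<And>t. t \<le> T \<Longrightarrow> unitary_mat (qdim n W) (U t)"
  shows "t \<le> T \<Longrightarrow> sqrt (sq_norm (qdim n W) (\<lambda>i. run n W U sel \<psi> t i - run n W U sel \<psi>' t i))
     \<le> (\<Sum>s<t. 2 * sqrt (query_weight n W U sel \<psi> \<psi>' s))"
proof (induction t)
  case 0
  show ?case by (simp add: mat_vec_diff[symmetric] sq_norm_def)
next
  case (Suc t)
  define D where "D = qdim n W"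
  define r where "r = run n W U sel \<psi> t"
  define r' where "r' = run n W U sel \<psi>' t"
  define f where "f = query_fun n \<psi> (sel (Suc t))"
  define g where "g = query_fun n \<psi>' (sel (Suc t))"
  have f: "\<And>a. a < 2^(2*n) \<Longrightarrow> f a < 2^(2*n)" using query_fun_less[OF \<psi>] by (simp add: f_def)
  have g: "\<And>a. a < 2^(2*n) \<Longrightarrow> g a < 2^(2*n)" using query_fun_less[OF \<psi>'] by (simp add: g_def)
  have "sq_norm D (\<lambda>i. run n W U sel \<psi> (Suc t) i - run n W U sel \<psi>' (Suc t) i)
     = sq_norm D (\<lambda>i. oracle_apply n W f (\<lambda>i. r i - r' i) i + (oracle_apply n W f r' i - oracle_apply n W g r' i))"
    using U[of "Suc t"] Suc.prems
    by (simp add: mat_vec_diff sq_norm_mat_vec D_def r_def r'_def f_def g_def query_eq_oracle_apply oracle_apply_diff)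
  then have "sqrt (sq_norm D (\<lambda>i. run n W U sel \<psi> (Suc t) i - run n W U sel \<psi>' (Suc t) i))
     \<le> sqrt (sq_norm D (oracle_apply n W f (\<lambda>i. r i - r' i)))
       + sqrt (sq_norm D (\<lambda>i. oracle_apply n W f r' i - oracle_apply n W g r' i))"
    using sqrt_sq_norm_add_le by simp
  also have "sq_norm D (oracle_apply n W f (\<lambda>i. r i - r' i)) = sq_norm D (\<lambda>i. r i - r' i)"
    unfolding D_def using f by (rule sq_norm_oracle_apply)
  also have "sqrt (sq_norm D (\<lambda>i. r i - r' i)) \<le> (\<Sum>s<t. 2 * sqrt (query_weight n W U sel \<psi> \<psi>' s))"
    using Suc by (simp add: D_def r_def r'_def)
  also have "sq_norm D (\<lambda>i. oracle_apply n W f r' i - oracle_apply n W g r' i) \<le> 4 * query_weight n W U sel \<psi> \<psi>' t"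
    unfolding D_def query_weight_def r'_def f_def g_def
    by (rule sq_norm_oracle_apply_diff_le[OF query_fun_less[OF \<psi>] query_fun_less[OF \<psi>']])
  finally show ?case by (simp add: D_def real_sqrt_mult real_sqrt_le_mono)
qed

lemma square_sum_le_card_mult_sum_squares:
  fixes a :: "'i \<Rightarrow> real"
  shows "(\<Sum>i\<in>A. a i)\<^sup>2 \<le> real (card A) * (\<Sum>i\<in>A. (a i)\<^sup>2)"
proof -
  have "\<bar>\<Sum>i\<in>A. a i\<bar> \<le> (\<Sum>i\<in>A. \<bar>a i\<bar> * \<bar>1\<bar>)" by (simp add: sum_abs)
  also have "\<dots> \<le> L2_set a A * L2_set (\<lambda>_. 1) A" by (rule L2_set_mult_ineq)
  finally have "(\<Sum>i\<in>A. a i)\<^sup>2 \<le> (L2_set a A * L2_set (\<lambda>_. 1) A)\<^sup>2"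
    by (metis abs_le_square_iff abs_of_nonneg L2_set_nonneg zero_le_mult_iff)
  also have "\<dots> = (\<Sum>i\<in>A. (a i)\<^sup>2) * real (card A)"
    by (simp add: L2_set_def power_mult_distrib sum_nonneg)
  finally show ?thesis by (simp add: mult.commute)
qed

lemma success_fixed_le_hybrid:
  assumes \<psi>: "\<psi> permutes {..<2^(2*n)}" and \<psi>': "\<psi>' permutes {..<2^(2*n)}"
    and U: "\<And>t. t \<le> T \<Longrightarrow> unitary_mat (qdim n W) (U t)"
  shows "success_fixed n W U sel out T \<psi> \<le> 8 * real T * (\<Sum>s<T. query_weight n W U sel \<psi> \<psi>' s)
     + 2 * (\<Sum>j<qdim n W. if out j \<in> zero_pairs n \<psi> then (cmod (run n W U sel \<psi>' T j))\<^sup>2 else 0)"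
proof -
  define D where "D = qdim n W"
  define G where "G = {j\<in>{..<D}. out j \<in> zero_pairs n \<psi>}"
  define r where "r = run n W U sel \<psi> T"
  define r' where "r' = run n W U sel \<psi>' T"
  have "success_fixed n W U sel out T \<psi> = (\<Sum>j\<in>G. (cmod (r j))\<^sup>2)"
    unfolding success_fixed_def G_def r_def D_def by (rule sum.cong) auto
  also have "\<dots> \<le> (\<Sum>j\<in>G. 2 * (cmod (r j - r' j))\<^sup>2 + 2 * (cmod (r' j))\<^sup>2)"
    by (rule sum_mono) (use norm_diff_power2_le[of "r j - r' j" "- r' j" for j] in simp)
  also have "\<dots> = 2 * (\<Sum>j\<in>G. (cmod (r j - r' j))\<^sup>2) + 2 * (\<Sum>j\<in>G. (cmod (r' j))\<^sup>2)"
    by (simp add: sum.distrib sum_distrib_left)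
  also have "(\<Sum>j\<in>G. (cmod (r j - r' j))\<^sup>2) \<le> sq_norm D (\<lambda>i. r i - r' i)"
    unfolding sq_norm_def G_def by (intro sum_mono2) auto
  also have "\<dots> = (sqrt (sq_norm D (\<lambda>i. r i - r' i)))\<^sup>2"
    by (simp add: sq_norm_nonneg)
  also have "\<dots> \<le> (\<Sum>s<T. 2 * sqrt (query_weight n W U sel \<psi> \<psi>' s))\<^sup>2"
    using run_dist_le[where U=U and T=T and t=T and sel=sel, OF \<psi> \<psi>' U]
    by (intro power_mono) (auto simp: D_def r_def r'_def sq_norm_nonneg)
  also have "\<dots> \<le> real T * (\<Sum>s<T. (2 * sqrt (query_weight n W U sel \<psi> \<psi>' s))\<^sup>2)"
    using square_sum_le_card_mult_sum_squares[of "\<lambda>s. 2 * sqrt (query_weight n W U sel \<psi> \<psi>' s)" "{..<T}"]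
    by simp
  also have "(\<Sum>s<T. (2 * sqrt (query_weight n W U sel \<psi> \<psi>' s))\<^sup>2) = 4 * (\<Sum>s<T. query_weight n W U sel \<psi> \<psi>' s)"
    by (simp add: power_mult_distrib sum_distrib_left query_weight_def sum_nonneg)
  also have "(\<Sum>j\<in>G. (cmod (r' j))\<^sup>2) = (\<Sum>j<D. if out j \<in> zero_pairs n \<psi> then (cmod (r' j))\<^sup>2 else 0)"
    unfolding G_def by (rule sum.inter_filter[OF finite_lessThan])
  finally show ?thesis unfolding D_def r'_def by (simp add: mult.assoc)
qed

section \<open>Families of permutations spread around a reference permutation\<close>

lemma sum_if_le_card_mult:
  fixes w :: "'i \<Rightarrow> real"
  assumes "finite A" "finite I" "\<And>i. i \<in> I \<Longrightarrow> 0 \<le> w i"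
    and "\<And>i. i \<in> I \<Longrightarrow> card {k\<in>A. P k i} \<le> K"
  shows "(\<Sum>k\<in>A. \<Sum>i\<in>I. if P k i then w i else 0) \<le> real K * (\<Sum>i\<in>I. w i)"
proof -
  have "(\<Sum>k\<in>A. \<Sum>i\<in>I. if P k i then w i else 0) = (\<Sum>i\<in>I. real (card {k\<in>A. P k i}) * w i)"
    by (subst sum.swap) (simp add: sum.If_cases[OF assms(1)] Int_def)
  also have "\<dots> \<le> (\<Sum>i\<in>I. real K * w i)"
    using assms(3,4) by (intro sum_mono mult_right_mono) auto
  finally show ?thesis by (simp add: sum_distrib_left)
qed

definition zero_padded :: "nat \<Rightarrow> nat set" where
  "zero_padded n = (\<lambda>x. x * 2^n) ` {..<2^n}"

lemma zero_padded_subset: "zero_padded n \<subseteq> {..<2^(2*n)}"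
proof
  fix a assume "a \<in> zero_padded n"
  then obtain x where "x < 2^n" "a = x * 2^n" by (auto simp: zero_padded_def)
  then show "a \<in> {..<2^(2*n)}" by (simp add: power_mult mult_2 power_add)
qed

lemma finite_zero_padded: "finite (zero_padded n)"
  by (simp add: zero_padded_def)

lemma card_zero_padded: "card (zero_padded n) = 2^n"
  unfolding zero_padded_def by (subst card_image) (auto simp: inj_on_def)

lemma card_zero_pairs: "card (zero_pairs n \<phi>) = card {a\<in>zero_padded n. \<phi> a \<in> zero_padded n}"
proof -
  have "bij_betw (\<lambda>(x, y). x * 2^n) (zero_pairs n \<phi>) {a\<in>zero_padded n. \<phi> a \<in> zero_padded n}"
    by (auto simp: bij_betw_def inj_on_def zero_pairs_def zero_padded_def image_iff)
  then show ?thesis by (rule bij_betw_same_card)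
qed

definition spread_family :: "nat \<Rightarrow> nat \<Rightarrow> nat \<Rightarrow> (nat \<Rightarrow> nat \<Rightarrow> nat) \<Rightarrow> (nat \<Rightarrow> nat) \<Rightarrow> bool" where
  "spread_family n K M \<psi> \<psi>' \<longleftrightarrow>
     \<psi>' permutes {..<2^(2*n)} \<and> (\<forall>k<M. \<psi> k permutes {..<2^(2*n)})
     \<and> (\<forall>a. card {k\<in>{..<M}. \<psi> k a \<noteq> \<psi>' a} \<le> K)
     \<and> (\<forall>a\<in>zero_padded n. card {k\<in>{..<M}. \<psi> k a \<in> zero_padded n} \<le> K)"

lemma card_query_fun_differ_le:
  assumes \<psi>: "spread_family n K M \<psi> \<psi>'" and a: "a < 2^(2*n)"
  shows "card {k\<in>{..<M}. query_fun n (\<psi> k) s a \<noteq> query_fun n \<psi>' s a} \<le> K"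
proof (cases s)
  case True
  then show ?thesis using \<psi> by (simp add: query_fun_def spread_family_def)
next
  case False
  define b where "b = inv_into {..<2^(2*n)} \<psi>' a"
  have p': "\<psi>' permutes {..<2^(2*n)}" and p: "\<And>k. k < M \<Longrightarrow> \<psi> k permutes {..<2^(2*n)}"
    using \<psi> by (auto simp: spread_family_def)
  have a': "a \<in> \<psi>' ` {..<2^(2*n)}" using a permutes_image[OF p'] by simp
  have b: "b < 2^(2*n)" "\<psi>' b = a"
    using inv_into_into[OF a'] f_inv_into_f[OF a'] by (simp_all add: b_def)
  have "{k\<in>{..<M}. query_fun n (\<psi> k) s a \<noteq> query_fun n \<psi>' s a} \<subseteq> {k\<in>{..<M}. \<psi> k b \<noteq> \<psi>' b}"
  proof safe
    fix k assume k: "k < M" and "query_fun n (\<psi> k) s a \<noteq> query_fun n \<psi>' s a" and "\<psi> k b = \<psi>' b"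
    moreover have "inv_into {..<2^(2*n)} (\<psi> k) (\<psi> k b) = b"
      using b permutes_inj[OF p[OF k]] by (simp add: inv_into_f_f inj_on_subset[of _ UNIV])
    ultimately show False using False b by (simp add: query_fun_def b_def)
  qed
  then have "card {k\<in>{..<M}. query_fun n (\<psi> k) s a \<noteq> query_fun n \<psi>' s a} \<le> card {k\<in>{..<M}. \<psi> k b \<noteq> \<psi>' b}"
    by (intro card_mono) auto
  also have "\<dots> \<le> K" using \<psi> by (simp add: spread_family_def)
  finally show ?thesis .
qed

lemma sum_query_weight_le:
  assumes W: "0 < W" and U: "\<And>t. t \<le> T \<Longrightarrow> unitary_mat (qdim n W) (U t)"
    and \<psi>: "spread_family n K M \<psi> \<psi>'" and s: "s \<le> T"
  shows "(\<Sum>k<M. query_weight n W U sel (\<psi> k) \<psi>' s) \<le> real K"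
proof -
  have "(\<Sum>k<M. query_weight n W U sel (\<psi> k) \<psi>' s) \<le> real K * sq_norm (qdim n W) (run n W U sel \<psi>' s)"
    unfolding query_weight_def sq_norm_def using card_query_fun_differ_le[OF \<psi> query_addr_less]
    by (intro sum_if_le_card_mult) auto
  also have "\<dots> = real K"
    using \<psi> sq_norm_run[OF W _ U s] by (simp add: spread_family_def)
  finally show ?thesis .
qed

lemma card_zero_pairs_member_le:
  assumes \<psi>: "spread_family n K M \<psi> \<psi>'"
  shows "card {k\<in>{..<M}. z \<in> zero_pairs n (\<psi> k)} \<le> K"
proof (cases "fst z < 2^n")
  case True
  have "card {k\<in>{..<M}. z \<in> zero_pairs n (\<psi> k)} \<le> card {k\<in>{..<M}. \<psi> k (fst z * 2^n) \<in> zero_padded n}"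
    by (intro card_mono) (auto simp: zero_pairs_def zero_padded_def)
  also have "\<dots> \<le> K" using \<psi> True by (simp add: spread_family_def zero_padded_def)
  finally show ?thesis .
next
  case False
  then have "{k\<in>{..<M}. z \<in> zero_pairs n (\<psi> k)} = {}" by (auto simp: zero_pairs_def)
  then show ?thesis by (metis card.empty zero_le)
qed

text \<open>All members are compared with the single run with oracle \<psi>', so the counting conditions
  bound the total query weight and the total output mass.\<close>
lemma sum_success_spread_family_le:
  assumes W: "0 < W" and U: "\<And>t. t \<le> T \<Longrightarrow> unitary_mat (qdim n W) (U t)"
    and \<psi>: "spread_family n K M \<psi> \<psi>'"
  shows "(\<Sum>k<M. success_fixed n W U sel out T (\<psi> k)) \<le> (8 * real T ^ 2 + 2) * real K"
proof -
  define r where "r = run n W U sel \<psi>' T"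
  define Z where "Z k = (\<Sum>j<qdim n W. if out j \<in> zero_pairs n (\<psi> k) then (cmod (r j))\<^sup>2 else 0)" for k
  have p': "\<psi>' permutes {..<2^(2*n)}" and p: "\<And>k. k < M \<Longrightarrow> \<psi> k permutes {..<2^(2*n)}"
    using \<psi> by (auto simp: spread_family_def)
  have "(\<Sum>k<M. success_fixed n W U sel out T (\<psi> k))
      \<le> (\<Sum>k<M. 8 * real T * (\<Sum>s<T. query_weight n W U sel (\<psi> k) \<psi>' s) + 2 * Z k)"
    unfolding Z_def r_def by (intro sum_mono success_fixed_le_hybrid[OF p p' U]) auto
  also have "\<dots> = 8 * real T * (\<Sum>s<T. \<Sum>k<M. query_weight n W U sel (\<psi> k) \<psi>' s) + 2 * (\<Sum>k<M. Z k)"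
    by (simp add: sum.distrib sum_distrib_left sum.swap[of _ "{..<T}"])
  also have "(\<Sum>s<T. \<Sum>k<M. query_weight n W U sel (\<psi> k) \<psi>' s) \<le> (\<Sum>s<T. real K)"
    by (intro sum_mono sum_query_weight_le[OF W U \<psi>]) auto
  also have "(\<Sum>k<M. Z k) \<le> real K * sq_norm (qdim n W) r"
    unfolding Z_def sq_norm_def using card_zero_pairs_member_le[OF \<psi>]
    by (intro sum_if_le_card_mult) auto
  also have "sq_norm (qdim n W) r = 1"
    unfolding r_def by (rule sq_norm_run[OF W p' U order_refl])
  finally show ?thesis by (simp add: power2_eq_square algebra_simps mult_right_mono)
qed

section \<open>Symmetries preserving the number of zero pairs\<close>

definition pad_perms :: "nat \<Rightarrow> (nat \<Rightarrow> nat) set" where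
  "pad_perms n = {\<alpha>. \<alpha> permutes {..<2^(2*n)} \<and> \<alpha> ` zero_padded n = zero_padded n}"

lemma pad_perms_id: "id \<in> pad_perms n"
  by (simp add: pad_perms_def permutes_id)

lemma pad_perms_comp: "\<alpha> \<in> pad_perms n \<Longrightarrow> \<beta> \<in> pad_perms n \<Longrightarrow> \<alpha> \<circ> \<beta> \<in> pad_perms n"
  by (simp add: pad_perms_def permutes_compose flip: image_image)

lemma pad_perms_inv:
  assumes "\<alpha> \<in> pad_perms n" shows "inv_into UNIV \<alpha> \<in> pad_perms n"
proof -
  have p: "\<alpha> permutes {..<2^(2*n)}" and X: "\<alpha> ` zero_padded n = zero_padded n"
    using assms by (auto simp: pad_perms_def)
  have "inv_into UNIV \<alpha> ` zero_padded n = zero_padded n"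
    using image_inv_f_f[OF permutes_inj[OF p], of "zero_padded n"] X by simp
  then show ?thesis using permutes_inv[OF p] by (simp add: pad_perms_def)
qed

lemma pad_perms_mem_iff: "\<alpha> \<in> pad_perms n \<Longrightarrow> \<alpha> a \<in> zero_padded n \<longleftrightarrow> a \<in> zero_padded n"
  unfolding pad_perms_def by (metis (mono_tags, lifting) mem_Collect_eq permutes_inj inj_image_mem_iff)

lemma finite_pad_perms: "finite (pad_perms n)"
  by (rule finite_subset[of _ "{\<alpha>. \<alpha> permutes {..<2^(2*n)}}"]) (auto simp: pad_perms_def finite_permutations)

definition perm_act :: "(nat \<Rightarrow> nat) \<times> (nat \<Rightarrow> nat) \<Rightarrow> (nat \<Rightarrow> nat) \<Rightarrow> nat \<Rightarrow> nat" where
  "perm_act g \<phi> = snd g \<circ> \<phi> \<circ> fst g"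

definition pair_comp :: "(nat \<Rightarrow> nat) \<times> (nat \<Rightarrow> nat) \<Rightarrow> (nat \<Rightarrow> nat) \<times> (nat \<Rightarrow> nat) \<Rightarrow> (nat \<Rightarrow> nat) \<times> (nat \<Rightarrow> nat)" where
  "pair_comp g c = (fst c \<circ> fst g, snd g \<circ> snd c)"

definition pair_inv :: "(nat \<Rightarrow> nat) \<times> (nat \<Rightarrow> nat) \<Rightarrow> (nat \<Rightarrow> nat) \<times> (nat \<Rightarrow> nat)" where
  "pair_inv g = (inv_into UNIV (fst g), inv_into UNIV (snd g))"

abbreviation pad_pairs :: "nat \<Rightarrow> ((nat \<Rightarrow> nat) \<times> (nat \<Rightarrow> nat)) set" where
  "pad_pairs n \<equiv> pad_perms n \<times> pad_perms n"

lemma card_pad_pairs_pos: "0 < card (pad_pairs n)"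
proof -
  have "0 < card (pad_perms n)" using finite_pad_perms pad_perms_id card_gt_0_iff by blast
  then show ?thesis by (simp add: card_cartesian_product)
qed

lemma perm_act_pair_comp: "perm_act (pair_comp g c) \<phi> = perm_act g (perm_act c \<phi>)"
  by (simp add: perm_act_def pair_comp_def comp_assoc)

lemma pair_comp_mem: "g \<in> pad_pairs n \<Longrightarrow> c \<in> pad_pairs n \<Longrightarrow> pair_comp g c \<in> pad_pairs n"
  by (auto simp: pair_comp_def pad_perms_comp)

lemma pair_inv_mem: "g \<in> pad_pairs n \<Longrightarrow> pair_inv g \<in> pad_pairs n"
  by (auto simp: pair_inv_def pad_perms_inv)

lemma pad_perms_inverses:
  assumes "\<alpha> \<in> pad_perms n"
  shows "\<alpha> (inv_into UNIV \<alpha> a) = a" "inv_into UNIV \<alpha> (\<alpha> a) = a"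
  using assms permutes_inverses by (fastforce simp: pad_perms_def)+

lemma perm_act_pair_inv:
  assumes "g \<in> pad_pairs n"
  shows "perm_act g (perm_act (pair_inv g) \<phi>) = \<phi>" "perm_act (pair_inv g) (perm_act g \<phi>) = \<phi>"
  using assms by (auto simp: perm_act_def pair_inv_def fun_eq_iff pad_perms_inverses mem_Times_iff)

lemma pair_comp_pair_inv:
  assumes "c \<in> pad_pairs n"
  shows "pair_comp (pair_comp g c) (pair_inv c) = g" "pair_comp (pair_comp g (pair_inv c)) c = g"
  using assms by (auto simp: pair_comp_def pair_inv_def prod_eq_iff fun_eq_iff pad_perms_inverses mem_Times_iff)

lemma perm_act_permutes:
  "g \<in> pad_pairs n \<Longrightarrow> \<phi> permutes {..<2^(2*n)} \<Longrightarrow> perm_act g \<phi> permutes {..<2^(2*n)}"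
  by (auto simp: pad_perms_def perm_act_def intro!: permutes_compose)

lemma perm_act_perms_K:
  assumes g: "g \<in> pad_pairs n" and \<phi>: "\<phi> \<in> perms_K n K"
  shows "perm_act g \<phi> \<in> perms_K n K"
proof -
  obtain \<alpha> \<beta> where g_eq: "g = (\<alpha>, \<beta>)" and \<alpha>: "\<alpha> \<in> pad_perms n" and \<beta>: "\<beta> \<in> pad_perms n"
    using g by auto
  define X where "X = zero_padded n"
  have "{a\<in>X. perm_act g \<phi> a \<in> X} = {a\<in>X. \<phi> (\<alpha> a) \<in> X}"
    using pad_perms_mem_iff[OF \<beta>] by (auto simp: perm_act_def g_eq X_def)
  also have "\<dots> = inv_into UNIV \<alpha> ` {b\<in>X. \<phi> b \<in> X}"
    using pad_perms_inverses[OF \<alpha>] pad_perms_mem_iff[OF \<alpha>] pad_perms_mem_iff[OF pad_perms_inv[OF \<alpha>]]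
    by (auto simp: X_def image_iff) metis
  moreover have "inj (inv_into UNIV \<alpha>)"
    using pad_perms_inv[OF \<alpha>] permutes_inj by (auto simp: pad_perms_def)
  ultimately have "card {a\<in>X. perm_act g \<phi> a \<in> X} = card {b\<in>X. \<phi> b \<in> X}"
    by (simp add: card_image inj_on_subset)
  then show ?thesis
    using \<phi> perm_act_permutes[OF g] by (simp add: perms_K_def is_perm_def card_zero_pairs X_def)
qed

lemma sum_perms_K_perm_act:
  assumes "g \<in> pad_pairs n"
  shows "(\<Sum>\<phi>\<in>perms_K n K. h (perm_act g \<phi>)) = (\<Sum>\<phi>\<in>perms_K n K. h \<phi>)"
  by (rule sum.reindex_bij_witness[where i="perm_act (pair_inv g)" and j="perm_act g"])
     (auto simp: perm_act_pair_inv[OF assms] perm_act_perms_K[OF assms] perm_act_perms_K[OF pair_inv_mem[OF assms]])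

lemma sum_pad_pairs_pair_comp:
  assumes "c \<in> pad_pairs n"
  shows "(\<Sum>g\<in>pad_pairs n. h (pair_comp g c)) = (\<Sum>g\<in>pad_pairs n. h g)"
  by (rule sum.reindex_bij_witness[where i="\<lambda>g. pair_comp g (pair_inv c)" and j="\<lambda>g. pair_comp g c"])
     (auto simp: pair_comp_pair_inv[OF assms] pair_comp_mem assms pair_inv_mem[OF assms])

lemma spread_family_perm_act:
  assumes g: "g \<in> pad_pairs n" and \<psi>: "spread_family n K M \<psi> \<psi>'"
  shows "spread_family n K M (\<lambda>k. perm_act g (\<psi> k)) (perm_act g \<psi>')"
proof -
  obtain \<alpha> \<beta> where g_eq: "g = (\<alpha>, \<beta>)" and \<alpha>: "\<alpha> \<in> pad_perms n" and \<beta>: "\<beta> \<in> pad_perms n"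
    using g by auto
  have inj: "inj \<beta>" using \<beta> by (auto simp: pad_perms_def permutes_inj)
  have "{k\<in>{..<M}. perm_act g (\<psi> k) a \<noteq> perm_act g \<psi>' a} = {k\<in>{..<M}. \<psi> k (\<alpha> a) \<noteq> \<psi>' (\<alpha> a)}" for a
    using inj by (auto simp: perm_act_def g_eq inj_eq)
  moreover have "{k\<in>{..<M}. perm_act g (\<psi> k) a \<in> zero_padded n} = {k\<in>{..<M}. \<psi> k (\<alpha> a) \<in> zero_padded n}" for a
    using pad_perms_mem_iff[OF \<beta>] by (auto simp: perm_act_def g_eq)
  moreover have "\<alpha> a \<in> zero_padded n" if "a \<in> zero_padded n" for a
    using pad_perms_mem_iff[OF \<alpha>] that by simp
  ultimately show ?thesis
    using \<psi> perm_act_permutes[OF g] by (simp add: spread_family_def)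
qed

section \<open>Rotations and the construction of spread families\<close>

lemma mod_add_right_inj:
  fixes i j k M :: nat
  assumes "i < M" "j < M" "(i + k) mod M = (j + k) mod M"
  shows "i = j"
proof -
  have *: "a = b" if "a < M" "b \<le> a" "(a + k) mod M = (b + k) mod M" for a b
  proof -
    have "M dvd a - b" using mod_eq_dvd_iff_nat[of "b + k" "a + k" M] that by simp
    then show ?thesis using that dvd_imp_le[of M "a - b"] by linarith
  qed
  show ?thesis using *[of i j] *[of j i] assms by linarith
qed

lemma bij_betw_add_mod: "bij_betw (\<lambda>i. (i + k) mod M) {..<M} {..<M::nat}"
proof -
  have inj: "inj_on (\<lambda>i. (i + k) mod M) {..<M}"
    by (auto simp: inj_on_def intro: mod_add_right_inj)
  moreover have "(\<lambda>i. (i + k) mod M) ` {..<M} \<subseteq> {..<M}" by auto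
  ultimately show ?thesis by (simp add: bij_betw_def endo_inj_surj)
qed

definition cyclic_shift :: "nat \<Rightarrow> (nat \<Rightarrow> 'a) \<Rightarrow> 'a set \<Rightarrow> nat \<Rightarrow> 'a \<Rightarrow> 'a" where
  "cyclic_shift M e A k a = (if a \<in> A then e ((inv_into {..<M} e a + k) mod M) else a)"

lemma cyclic_shift_permutes:
  assumes e: "bij_betw e {..<M} A"
  shows "cyclic_shift M e A k permutes A"
proof (rule bij_imp_permutes)
  have "bij_betw (e \<circ> (\<lambda>i. (i + k) mod M) \<circ> inv_into {..<M} e) A A"
    by (rule bij_betw_trans[OF bij_betw_inv_into[OF e] bij_betw_trans[OF bij_betw_add_mod e]])
  then show "bij_betw (cyclic_shift M e A k) A A"
    by (rule bij_betw_cong[THEN iffD1, rotated]) (simp add: cyclic_shift_def)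
qed (simp add: cyclic_shift_def)

lemma inj_on_cyclic_shift_orbit:
  assumes e: "bij_betw e {..<M} A" and a: "a \<in> A"
  shows "inj_on (\<lambda>k. cyclic_shift M e A k a) {..<M}"
proof
  fix k k' assume k: "k \<in> {..<M}" "k' \<in> {..<M}"
    and eq: "cyclic_shift M e A k a = cyclic_shift M e A k' a"
  define j where "j = inv_into {..<M} e a"
  have "e ((j + k) mod M) = e ((j + k') mod M)" using eq a by (simp add: cyclic_shift_def j_def)
  then have "(k + j) mod M = (k' + j) mod M"
    using e k by (auto simp: bij_betw_def inj_on_def add.commute)
  then show "k = k'" using k by (auto intro: mod_add_right_inj)
qed

lemma card_orbit_hits_le:
  assumes "inj_on f {..<M::nat}" "\<And>k. f k \<in> A" "finite (A \<inter> B)"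
  shows "card {k\<in>{..<M}. f k \<in> B} \<le> card (A \<inter> B)"
proof -
  have "inj_on f {k\<in>{..<M}. f k \<in> B}" using assms(1) by (rule inj_on_subset) auto
  moreover have "f ` {k\<in>{..<M}. f k \<in> B} \<subseteq> A \<inter> B" using assms(2) by auto
  ultimately show ?thesis using assms(3) by (rule card_inj_on_le)
qed

lemma card_rotation_hits_le:
  assumes X: "\<And>b. b \<in> X \<Longrightarrow> inj_on (\<lambda>k. \<alpha> k b) {..<M::nat} \<and> (\<forall>k. \<alpha> k b \<in> X)"
    and Y: "\<And>b. b \<in> Y \<Longrightarrow> inj_on (\<lambda>k. \<alpha> k b) {..<M} \<and> (\<forall>k. \<alpha> k b \<in> Y)"
    and fixed: "\<And>b k. b \<notin> X \<union> Y \<Longrightarrow> \<alpha> k b = b"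
    and D: "D \<subseteq> X \<union> Y" "finite D" "card (D \<inter> X) \<le> K" "card (D \<inter> Y) \<le> K"
  shows "card {k\<in>{..<M}. \<alpha> k a \<in> D} \<le> K"
proof -
  consider "a \<in> X" | "a \<in> Y" | "a \<notin> X \<union> Y" by blast
  then show ?thesis
  proof cases
    case 1
    have "card {k\<in>{..<M}. \<alpha> k a \<in> D} \<le> card (X \<inter> D)"
      using X[OF 1] D(2) by (intro card_orbit_hits_le) auto
    then show ?thesis using D(3) by (simp add: Int_commute)
  next
    case 2
    have "card {k\<in>{..<M}. \<alpha> k a \<in> D} \<le> card (Y \<inter> D)"
      using Y[OF 2] D(2) by (intro card_orbit_hits_le) auto
    then show ?thesis using D(4) by (simp add: Int_commute)
  next
    case 3
    then have "{k\<in>{..<M}. \<alpha> k a \<in> D} = {}" using fixed D(1) by auto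
    then show ?thesis by (metis card.empty zero_le)
  qed
qed

lemma exists_permutes_exchange:
  assumes "finite S" "finite U" "card S = card U" "S \<inter> U = {}"
  obtains \<tau> where "\<tau> permutes S \<union> U" "\<tau> ` S = U" "\<tau> ` U = S"
proof -
  obtain \<sigma> where \<sigma>: "bij_betw \<sigma> S U" using finite_same_card_bij assms(1-3) by blast
  define \<tau> where "\<tau> a = (if a \<in> S then \<sigma> a else if a \<in> U then inv_into S \<sigma> a else a)" for a
  have S: "bij_betw \<tau> S U" using \<sigma> by (rule bij_betw_cong[THEN iffD1, rotated]) (simp add: \<tau>_def)
  have U: "bij_betw \<tau> U S" using bij_betw_inv_into[OF \<sigma>]
    by (rule bij_betw_cong[THEN iffD1, rotated]) (use assms(4) in \<open>auto simp: \<tau>_def\<close>)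
  have "bij_betw \<tau> (S \<union> U) (U \<union> S)" using assms(4) by (intro bij_betw_combine[OF S U]) auto
  then have "\<tau> permutes S \<union> U" by (intro bij_imp_permutes) (auto simp: \<tau>_def Un_commute)
  with S U show ?thesis using that by (auto simp: bij_betw_def)
qed

text \<open>Here 2 * 2^n \<le> 2^(2*n) is needed: only 2 * 2^n - K inputs lie in X or in \<phi> -` X.\<close>
lemma exists_inputs_avoiding_zero_padded:
  assumes n: "1 \<le> n" and \<phi>: "\<phi> \<in> perms_K n K"
  obtains U where "finite U" "card U = K" "U \<subseteq> {..<2^(2*n)}"
    "U \<inter> zero_padded n = {}" "U \<inter> \<phi> -` zero_padded n = {}"
proof -
  define N :: nat where "N = 2^(2*n)"
  define X where "X = zero_padded n"
  define Q where "Q = \<phi> -` X"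
  have p: "\<phi> permutes {..<N}" using \<phi> by (simp add: perms_K_def is_perm_def N_def)
  have XN: "X \<subseteq> {..<N}" using zero_padded_subset by (simp add: X_def N_def)
  have QN: "Q \<subseteq> {..<N}" using XN permutes_not_in[OF p] by (fastforce simp: Q_def)
  have fX: "finite X" and fQ: "finite Q" using XN QN finite_subset by blast+
  have cQ: "card Q = 2^n"
    using card_vimage_inj[OF permutes_inj[OF p], of X] permutes_surj[OF p]
    by (simp add: Q_def X_def card_zero_padded)
  have cXQ: "card (X \<inter> Q) = K"
    using \<phi> by (simp add: X_def Q_def perms_K_def card_zero_pairs Int_def)
  moreover have "card (X \<inter> Q) \<le> 2^n"
    using card_mono[OF fX, of "X \<inter> Q"] by (simp add: X_def card_zero_padded)
  moreover have "card (X \<union> Q) + card (X \<inter> Q) = 2 * 2^n"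
    using card_Un_Int[OF fX fQ] cQ by (simp add: X_def card_zero_padded)
  moreover have "2 * 2^n \<le> N"
    using power_increasing[OF n, of "2::nat"] mult_right_mono[of 2 "2^n" "2^n::nat"]
    by (simp add: N_def power_mult mult_2 power_add)
  ultimately have "K \<le> card ({..<N} - (X \<union> Q))"
    using XN QN by (subst card_Diff_subset) (auto intro: finite_subset)
  then obtain U where "U \<subseteq> {..<N} - (X \<union> Q)" "card U = K" "finite U"
    by (rule obtain_subset_with_card_n)
  then show ?thesis using that by (auto simp: N_def X_def Q_def)
qed

text \<open>Exchanging the K zero-pair inputs of \<phi> with K inputs that \<phi> maps neither from nor
  into the zero-padded strings removes all zero pairs.\<close>
lemma exists_zero_pair_free_perm:
  assumes n: "1 \<le> n" and \<phi>: "\<phi> \<in> perms_K n K"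
  obtains \<phi>' where "\<phi>' permutes {..<2^(2*n)}" "\<forall>a\<in>zero_padded n. \<phi>' a \<notin> zero_padded n"
    "{a. \<phi> a \<noteq> \<phi>' a} \<subseteq> zero_padded n \<union> \<phi>' -` zero_padded n"
    "card ({a. \<phi> a \<noteq> \<phi>' a} \<inter> zero_padded n) \<le> K" "card ({a. \<phi> a \<noteq> \<phi>' a} - zero_padded n) \<le> K"
proof -
  define X where "X = zero_padded n"
  define S where "S = {a\<in>X. \<phi> a \<in> X}"
  obtain U where fU: "finite U" and cU: "card U = K" and UN: "U \<subseteq> {..<2^(2*n)}"
    and UX: "U \<inter> X = {}" and UQ: "U \<inter> \<phi> -` X = {}"
    using exists_inputs_avoiding_zero_padded[OF n \<phi>] unfolding X_def by blast
  have p: "\<phi> permutes {..<2^(2*n)}" using \<phi> by (simp add: perms_K_def is_perm_def)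
  have fS: "finite S" using finite_zero_padded by (simp add: S_def X_def)
  have cS: "card S = K" using \<phi> by (simp add: S_def X_def perms_K_def card_zero_pairs)
  have SU: "S \<inter> U = {}" using UX by (auto simp: S_def)
  obtain \<tau> where \<tau>: "\<tau> permutes S \<union> U" "\<tau> ` S = U" "\<tau> ` U = S"
    using exists_permutes_exchange[OF fS fU _ SU] cS cU by metis
  define \<phi>' where "\<phi>' = \<phi> \<circ> \<tau>"
  have "S \<union> U \<subseteq> {..<2^(2*n)}" using zero_padded_subset UN by (auto simp: S_def X_def)
  then have p': "\<phi>' permutes {..<2^(2*n)}"
    unfolding \<phi>'_def by (intro permutes_compose p permutes_subset[OF \<tau>(1)])
  have D: "{a. \<phi> a \<noteq> \<phi>' a} \<subseteq> S \<union> U"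
  proof
    fix a assume "a \<in> {a. \<phi> a \<noteq> \<phi>' a}"
    then have "\<tau> a \<noteq> a" by (auto simp: \<phi>'_def)
    then show "a \<in> S \<union> U" using permutes_not_in[OF \<tau>(1)] by blast
  qed
  have free: "\<phi>' a \<notin> X" if a: "a \<in> X" for a
  proof (cases "a \<in> S")
    case True
    then have "\<tau> a \<in> U" using \<tau>(2) by blast
    then show ?thesis using UQ by (auto simp: \<phi>'_def)
  next
    case False
    then have "a \<notin> S \<union> U" using a UX by auto
    then have "\<tau> a = a" using permutes_not_in[OF \<tau>(1)] by blast
    then show ?thesis using a False by (simp add: \<phi>'_def S_def)
  qed
  have "U \<subseteq> \<phi>' -` X" using \<tau>(3) by (auto simp: \<phi>'_def S_def)
  then have DXY: "{a. \<phi> a \<noteq> \<phi>' a} \<subseteq> X \<union> \<phi>' -` X" using D by (auto simp: S_def)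
  have "card ({a. \<phi> a \<noteq> \<phi>' a} \<inter> X) \<le> card S" using D UX by (intro card_mono[OF fS]) auto
  moreover have "card ({a. \<phi> a \<noteq> \<phi>' a} - X) \<le> card U" using D by (intro card_mono[OF fU]) (auto simp: S_def)
  ultimately show ?thesis using that p' free DXY cS cU by (simp add: X_def)
qed

lemma exists_independent_rotations:
  assumes fX: "finite X" and fY: "finite Y" and cX: "card X = M" and cY: "card Y = M"
    and XY: "X \<inter> Y = {}"
  obtains \<alpha> where "\<And>k. \<alpha> k permutes X \<union> Y" "\<And>k. \<alpha> k ` X = X" "\<And>k. \<alpha> k ` Y = Y"
    "\<And>a. a \<in> X \<Longrightarrow> inj_on (\<lambda>k. \<alpha> k a) {..<M}" "\<And>a. a \<in> Y \<Longrightarrow> inj_on (\<lambda>k. \<alpha> k a) {..<M}"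
proof -
  obtain eX eY where eX: "bij_betw eX {..<M} X" and eY: "bij_betw eY {..<M} Y"
    using finite_same_card_bij[of "{..<M}"] fX fY cX cY by (metis card_lessThan finite_lessThan)
  define \<rho>X where "\<rho>X k = cyclic_shift M eX X k" for k
  define \<rho>Y where "\<rho>Y k = cyclic_shift M eY Y k" for k
  have \<rho>X: "\<rho>X k permutes X" and \<rho>Y: "\<rho>Y k permutes Y" for k
    unfolding \<rho>X_def \<rho>Y_def by (intro cyclic_shift_permutes eX eY)+
  define \<alpha> where "\<alpha> k = \<rho>X k \<circ> \<rho>Y k" for k
  have \<alpha>X: "\<alpha> k a = \<rho>X k a" if "a \<in> X" for k a
  proof -
    have "a \<notin> Y" using that XY by blast
    then show ?thesis using permutes_not_in[OF \<rho>Y] by (simp add: \<alpha>_def)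
  qed
  have \<alpha>Y: "\<alpha> k a = \<rho>Y k a" if "a \<in> Y" for k a
  proof -
    have "\<rho>Y k a \<notin> X" using that XY permutes_in_image[OF \<rho>Y] by blast
    then show ?thesis using permutes_not_in[OF \<rho>X] by (simp add: \<alpha>_def)
  qed
  have "\<alpha> k permutes X \<union> Y" for k
    unfolding \<alpha>_def by (intro permutes_compose permutes_subset[OF \<rho>X] permutes_subset[OF \<rho>Y]) auto
  moreover have "\<alpha> k ` X = X" and "\<alpha> k ` Y = Y" for k
    using permutes_image[OF \<rho>X] permutes_image[OF \<rho>Y] \<alpha>X \<alpha>Y by (metis image_cong)+
  moreover have "inj_on (\<lambda>k. \<alpha> k a) {..<M}" if "a \<in> X" for a
    using inj_on_cyclic_shift_orbit[OF eX that] \<alpha>X[OF that] by (simp add: \<rho>X_def)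
  moreover have "inj_on (\<lambda>k. \<alpha> k a) {..<M}" if "a \<in> Y" for a
    using inj_on_cyclic_shift_orbit[OF eY that] \<alpha>Y[OF that] by (simp add: \<rho>Y_def)
  ultimately show ?thesis by (rule that)
qed

text \<open>When \<phi>' has no zero pairs, X = zero_padded n and Y = \<phi>' -` X are disjoint, so X and Y
  can be rotated independently; each rotation \<alpha> pairs with \<phi>' \<circ> \<alpha>\<inverse> \<circ> \<phi>'\<inverse> to fix \<phi>'.\<close>
lemma exists_stabilizing_rotations:
  assumes p': "\<phi>' permutes {..<2^(2*n)}" and free: "\<forall>a\<in>zero_padded n. \<phi>' a \<notin> zero_padded n"
  obtains c where "\<And>k. c k \<in> pad_pairs n" "\<And>k. perm_act (c k) \<phi>' = \<phi>'"
    "\<And>a. a \<in> zero_padded n \<Longrightarrow> inj_on (\<lambda>k. fst (c k) a) {..<2^n::nat} \<and> (\<forall>k. fst (c k) a \<in> zero_padded n)"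
    "\<And>a. a \<in> \<phi>' -` zero_padded n \<Longrightarrow> inj_on (\<lambda>k. fst (c k) a) {..<2^n} \<and> (\<forall>k. fst (c k) a \<in> \<phi>' -` zero_padded n)"
    "\<And>a k. a \<notin> zero_padded n \<union> \<phi>' -` zero_padded n \<Longrightarrow> fst (c k) a = a"
proof -
  define X where "X = zero_padded n"
  define Y where "Y = \<phi>' -` X"
  have XN: "X \<subseteq> {..<2^(2*n)}" using zero_padded_subset by (simp add: X_def)
  have YN: "Y \<subseteq> {..<2^(2*n)}" using XN permutes_not_in[OF p'] by (fastforce simp: Y_def)
  have fX: "finite X" and fY: "finite Y" using XN YN finite_subset by blast+
  have cX: "card X = 2^n" by (simp add: X_def card_zero_padded)
  have cY: "card Y = 2^n"
    using card_vimage_inj[OF permutes_inj[OF p'], of X] permutes_surj[OF p']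
    by (simp add: Y_def X_def card_zero_padded)
  have XY: "X \<inter> Y = {}" using free by (auto simp: X_def Y_def)
  obtain \<alpha> where \<alpha>p: "\<And>k. \<alpha> k permutes X \<union> Y"
    and \<alpha>X: "\<And>k. \<alpha> k ` X = X" and \<alpha>Y: "\<And>k. \<alpha> k ` Y = Y"
    and injX: "\<And>a. a \<in> X \<Longrightarrow> inj_on (\<lambda>k. \<alpha> k a) {..<2^n::nat}"
    and injY: "\<And>a. a \<in> Y \<Longrightarrow> inj_on (\<lambda>k. \<alpha> k a) {..<2^n}"
    using exists_independent_rotations[OF fX fY cX cY XY] by blast
  have \<alpha>N: "\<alpha> k permutes {..<2^(2*n)}" for k using permutes_subset[OF \<alpha>p] XN YN by blast
  define c where "c k = (\<alpha> k, \<phi>' \<circ> inv_into UNIV (\<alpha> k) \<circ> inv_into UNIV \<phi>')" for k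
  have "c k \<in> pad_pairs n" for k
  proof -
    have "inv_into UNIV \<phi>' ` X = Y"
      using bij_vimage_eq_inv_image[OF permutes_bij[OF p']] by (simp add: Y_def)
    moreover have "inv_into UNIV (\<alpha> k) ` Y = Y"
      using image_inv_f_f[OF permutes_inj[OF \<alpha>N], where A=Y] \<alpha>Y by simp
    moreover have "\<phi>' ` Y = X" using surj_image_vimage_eq[OF permutes_surj[OF p']] by (simp add: Y_def)
    ultimately have "(\<phi>' \<circ> inv_into UNIV (\<alpha> k) \<circ> inv_into UNIV \<phi>') ` X = X"
      by (simp only: image_comp[symmetric])
    then show ?thesis using \<alpha>N \<alpha>X p'
      by (simp add: c_def pad_perms_def X_def permutes_compose permutes_inv)
  qed
  moreover have "perm_act (c k) \<phi>' = \<phi>'" for k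
    by (simp add: perm_act_def c_def fun_eq_iff permutes_inverses[OF p'] permutes_inverses[OF \<alpha>N])
  moreover have "inj_on (\<lambda>k. fst (c k) a) {..<2^n} \<and> (\<forall>k. fst (c k) a \<in> X)" if "a \<in> X" for a
    using injX[OF that] \<alpha>X that by (auto simp: c_def)
  moreover have "inj_on (\<lambda>k. fst (c k) a) {..<2^n} \<and> (\<forall>k. fst (c k) a \<in> Y)" if "a \<in> Y" for a
    using injY[OF that] \<alpha>Y that by (auto simp: c_def)
  moreover have "fst (c k) a = a" if "a \<notin> X \<union> Y" for a k
    using that permutes_not_in[OF \<alpha>p] by (simp add: c_def)
  ultimately show ?thesis unfolding X_def Y_def by (rule that)
qed

lemma perm_act_eq_iff_of_stabilizer:
  assumes "c \<in> pad_pairs n" "perm_act c \<phi>' = \<phi>'"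
  shows "perm_act c \<phi> a = \<phi>' a \<longleftrightarrow> \<phi> (fst c a) = \<phi>' (fst c a)"
proof -
  have "inj (snd c)" using assms(1) permutes_inj by (auto simp: pad_perms_def)
  moreover have "\<phi>' a = snd c (\<phi>' (fst c a))" using assms(2) by (metis comp_apply perm_act_def)
  ultimately show ?thesis by (simp add: perm_act_def inj_eq)
qed

lemma exists_spread_family:
  assumes \<phi>: "\<phi> \<in> perms_K n K" and K: "1 \<le> K"
  obtains c \<phi>' where "\<And>k. c k \<in> pad_pairs n" "spread_family n K (2^n) (\<lambda>k. perm_act (c k) \<phi>) \<phi>'"
proof (cases "n = 0")
  case True
  have "card {k\<in>{..<1::nat}. P k} \<le> K" for P
  proof -
    have "card {k\<in>{..<1::nat}. P k} \<le> card {..<1::nat}" by (intro card_mono) auto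
    with K show ?thesis by simp
  qed
  then have "spread_family n K (2^n) (\<lambda>k. perm_act (id, id) \<phi>) \<phi>"
    using \<phi> True by (simp add: spread_family_def perm_act_def perms_K_def is_perm_def)
  then show ?thesis by (rule that[rotated]) (simp add: pad_perms_id)
next
  case False
  then have n: "1 \<le> n" by simp
  let ?X = "zero_padded n"
  obtain \<phi>' where p': "\<phi>' permutes {..<2^(2*n)}" and free: "\<forall>a\<in>?X. \<phi>' a \<notin> ?X"
    and DXY: "{a. \<phi> a \<noteq> \<phi>' a} \<subseteq> ?X \<union> \<phi>' -` ?X"
    and DX: "card ({a. \<phi> a \<noteq> \<phi>' a} \<inter> ?X) \<le> K" and DY: "card ({a. \<phi> a \<noteq> \<phi>' a} - ?X) \<le> K"
    by (rule exists_zero_pair_free_perm[OF n \<phi>])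
  let ?D = "{a. \<phi> a \<noteq> \<phi>' a}"
  obtain c where c: "\<And>k. c k \<in> pad_pairs n" and fix': "\<And>k. perm_act (c k) \<phi>' = \<phi>'"
    and cX: "\<And>a. a \<in> ?X \<Longrightarrow> inj_on (\<lambda>k. fst (c k) a) {..<2^n::nat} \<and> (\<forall>k. fst (c k) a \<in> ?X)"
    and cY: "\<And>a. a \<in> \<phi>' -` ?X \<Longrightarrow> inj_on (\<lambda>k. fst (c k) a) {..<2^n} \<and> (\<forall>k. fst (c k) a \<in> \<phi>' -` ?X)"
    and cO: "\<And>a k. a \<notin> ?X \<union> \<phi>' -` ?X \<Longrightarrow> fst (c k) a = a"
    using exists_stabilizing_rotations[OF p' free] by blast
  have fX: "finite ?X" by (rule finite_zero_padded)
  have fD: "finite ?D"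
    using finite_subset[OF DXY] fX finite_vimageI[OF fX permutes_inj[OF p']] by simp
  have "card (?D \<inter> \<phi>' -` ?X) \<le> card (?D - ?X)" using free fD by (intro card_mono) auto
  then have DY': "card (?D \<inter> \<phi>' -` ?X) \<le> K" using DY by simp
  have "{k\<in>{..<2^n}. perm_act (c k) \<phi> a \<noteq> \<phi>' a} = {k\<in>{..<2^n}. fst (c k) a \<in> ?D}" for a
    using perm_act_eq_iff_of_stabilizer[OF c fix'] by simp
  then have "card {k\<in>{..<2^n}. perm_act (c k) \<phi> a \<noteq> \<phi>' a} \<le> K" for a
    using card_rotation_hits_le[OF cX cY cO DXY fD DX DY'] by simp
  moreover have "card {k\<in>{..<2^n}. perm_act (c k) \<phi> a \<in> ?X} \<le> K" if a: "a \<in> ?X" for a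
  proof -
    have "{k\<in>{..<2^n}. perm_act (c k) \<phi> a \<in> ?X} = {k\<in>{..<2^n}. fst (c k) a \<in> {b. \<phi> b \<in> ?X}}"
      using c pad_perms_mem_iff by (auto simp: perm_act_def mem_Times_iff)
    also have "card \<dots> \<le> card (?X \<inter> {b. \<phi> b \<in> ?X})"
      using cX[OF a] fX by (intro card_orbit_hits_le) auto
    also have "\<dots> = K" using \<phi> by (simp add: perms_K_def card_zero_pairs Int_def)
    finally show ?thesis .
  qed
  moreover have "perm_act (c k) \<phi> permutes {..<2^(2*n)}" for k
    using \<phi> by (intro perm_act_permutes[OF c]) (simp add: perms_K_def is_perm_def)
  ultimately have "spread_family n K (2^n) (\<lambda>k. perm_act (c k) \<phi>) \<phi>'"
    using p' by (simp add: spread_family_def)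
  with c show ?thesis by (rule that)
qed

text \<open>Averaging over the cosets of the rotations: every coset is the orbit of a spread family.\<close>
lemma sum_orbit_success_le:
  assumes W: "0 < W" and U: "\<And>t. t \<le> T \<Longrightarrow> unitary_mat (qdim n W) (U t)"
    and \<phi>: "\<phi> \<in> perms_K n K" and K: "1 \<le> K"
  shows "(\<Sum>g\<in>pad_pairs n. success_fixed n W U sel out T (perm_act g \<phi>))
     \<le> real (card (pad_pairs n)) * ((8 * real T ^ 2 + 2) * real K / 2^n)"
proof -
  obtain c \<phi>' where c: "\<And>k. c k \<in> pad_pairs n"
    and fam: "spread_family n K (2^n) (\<lambda>k. perm_act (c k) \<phi>) \<phi>'"
    using exists_spread_family[OF \<phi> K] by blast
  define F where "F g = success_fixed n W U sel out T (perm_act g \<phi>)" for g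
  have "2^n * (\<Sum>g\<in>pad_pairs n. F g) = (\<Sum>k<2^n. \<Sum>g\<in>pad_pairs n. F (pair_comp g (c k)))"
    by (simp add: sum_pad_pairs_pair_comp[OF c])
  also have "\<dots> = (\<Sum>g\<in>pad_pairs n. \<Sum>k<2^n. success_fixed n W U sel out T (perm_act g (perm_act (c k) \<phi>)))"
    by (subst sum.swap) (simp add: F_def perm_act_pair_comp)
  also have "\<dots> \<le> (\<Sum>g\<in>pad_pairs n. (8 * real T ^ 2 + 2) * real K)"
    by (intro sum_mono sum_success_spread_family_le[OF W U spread_family_perm_act[OF _ fam]])
  also have "\<dots> = real (card (pad_pairs n)) * ((8 * real T ^ 2 + 2) * real K)" by simp
  finally show ?thesis by (simp add: F_def field_simps)
qed

theorem lemma4: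
  fixes n K W T :: nat
    and U :: "nat \<Rightarrow> nat \<Rightarrow> nat \<Rightarrow> complex"
    and sel :: "nat \<Rightarrow> bool"
    and out :: "nat \<Rightarrow> nat \<times> nat"
    and \<epsilon> :: real
  assumes "1 \<le> K" and "K \<le> 2^n"
    and "0 < W"
    and "\<And>t. t \<le> T \<Longrightarrow> unitary_mat (qdim n W) (U t)"
    and "\<epsilon> = success_prob n K W U sel out T"
    and "\<epsilon> > 0"
  shows "\<epsilon> \<le> 8 * (real T + 1)^2 * real K / 2^n"
proof -
  define P where "P = perms_K n K"
  define S where "S \<phi> = success_fixed n W U sel out T \<phi>" for \<phi>
  define B where "B = (8 * real T ^ 2 + 2) * real K / 2^n"
  have "real (card (pad_pairs n)) * (\<Sum>\<phi>\<in>P. S \<phi>) = (\<Sum>g\<in>pad_pairs n. \<Sum>\<phi>\<in>P. S (perm_act g \<phi>))"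
    by (simp add: sum_perms_K_perm_act P_def)
  also have "\<dots> = (\<Sum>\<phi>\<in>P. \<Sum>g\<in>pad_pairs n. S (perm_act g \<phi>))"
    by (rule sum.swap)
  also have "\<dots> \<le> (\<Sum>\<phi>\<in>P. real (card (pad_pairs n)) * B)"
    unfolding S_def B_def P_def by (intro sum_mono sum_orbit_success_le assms(1,3,4))
  also have "\<dots> = real (card (pad_pairs n)) * (real (card P) * B)" by simp
  finally have "real (card (pad_pairs n)) * (\<Sum>\<phi>\<in>P. S \<phi>) \<le> real (card (pad_pairs n)) * (real (card P) * B)" .
  moreover have "0 < real (card (pad_pairs n))" using card_pad_pairs_pos by simp
  ultimately have "(\<Sum>\<phi>\<in>P. S \<phi>) \<le> real (card P) * B" by (simp only: mult_le_cancel_left_pos)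
  then have "\<epsilon> \<le> B"
    using assms(5) by (cases "card P = 0") (simp_all add: success_prob_def P_def S_def B_def divide_le_eq mult.commute)
  also have "B \<le> 8 * (real T + 1)^2 * real K / 2^n"
    unfolding B_def by (intro divide_right_mono mult_right_mono) (auto simp: power2_eq_square algebra_simps)
  finally show ?thesis .
qed

end
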